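(* Let $k\ge 1$ be an integer and let $G$ be a graph with $\mathrm{diam}(G)\le 2k+1$. Then $\mathrm{gp}(G)\ge \alpha_k(G)$.
   Context: All graphs are finite, simple and connected; $\mathrm{diam}(G)$ is the maximum distance between two vertices. A set $S$ of vertices is a $k$-packing if $d(u,v)>k$ for all distinct $u,v\in S$; $\alpha_k(G)$ is the maximum cardinality of a $k$-packing of $G$. A set of vertices is a general position set if no three of its vertices lie on a common geodesic (shortest path); $\mathrm{gp}(G)$ is the maximum cardinality of a general position set of $G$. *)

theory Defs
  imports Main
begin

definition simple_graph :: "'a set \<Rightarrow> ('a \<Rightarrow> 'a \<Rightarrow> bool) \<Rightarrow> bool" where
  "simple_graph V E \<longleftrightarrow> finite V \<and> V \<noteq> {} \<and>
     (\<forall>u v. E u v \<longrightarrow> u \<in> V \<and> v \<in> V) \<and>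
     (\<forall>u v. E u v \<longrightarrow> E v u) \<and> (\<forall>u. \<not> E u u)"

text \<open>A walk is a nonempty vertex list with consecutive vertices adjacent;
  its length is the number of edges, i.e. length xs - 1.\<close>
definition is_walk :: "'a set \<Rightarrow> ('a \<Rightarrow> 'a \<Rightarrow> bool) \<Rightarrow> 'a list \<Rightarrow> bool" where
  "is_walk V E xs \<longleftrightarrow> xs \<noteq> [] \<and> set xs \<subseteq> V \<and>
     (\<forall>i. Suc i < length xs \<longrightarrow> E (xs ! i) (xs ! Suc i))"

definition connected_graph :: "'a set \<Rightarrow> ('a \<Rightarrow> 'a \<Rightarrow> bool) \<Rightarrow> bool" where
  "connected_graph V E \<longleftrightarrow>
     (\<forall>u\<in>V. \<forall>v\<in>V. \<exists>xs. is_walk V E xs \<and> hd xs = u \<and> last xs = v)"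

definition dist :: "'a set \<Rightarrow> ('a \<Rightarrow> 'a \<Rightarrow> bool) \<Rightarrow> 'a \<Rightarrow> 'a \<Rightarrow> nat" where
  "dist V E u v = (LEAST n. \<exists>xs. is_walk V E xs \<and> hd xs = u \<and> last xs = v \<and> length xs = Suc n)"

definition diam :: "'a set \<Rightarrow> ('a \<Rightarrow> 'a \<Rightarrow> bool) \<Rightarrow> nat" where
  "diam V E = Max {dist V E u v | u v. u \<in> V \<and> v \<in> V}"

definition geodesic :: "'a set \<Rightarrow> ('a \<Rightarrow> 'a \<Rightarrow> bool) \<Rightarrow> 'a list \<Rightarrow> bool" where
  "geodesic V E xs \<longleftrightarrow> is_walk V E xs \<and> length xs = Suc (dist V E (hd xs) (last xs))"

definition k_packing :: "'a set \<Rightarrow> ('a \<Rightarrow> 'a \<Rightarrow> bool) \<Rightarrow> nat \<Rightarrow> 'a set \<Rightarrow> bool" where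
  "k_packing V E k S \<longleftrightarrow> S \<subseteq> V \<and> (\<forall>u\<in>S. \<forall>v\<in>S. u \<noteq> v \<longrightarrow> dist V E u v > k)"

definition packing_number :: "'a set \<Rightarrow> ('a \<Rightarrow> 'a \<Rightarrow> bool) \<Rightarrow> nat \<Rightarrow> nat" where
  "packing_number V E k = Max {card S | S. k_packing V E k S}"

definition gp_set :: "'a set \<Rightarrow> ('a \<Rightarrow> 'a \<Rightarrow> bool) \<Rightarrow> 'a set \<Rightarrow> bool" where
  "gp_set V E S \<longleftrightarrow> S \<subseteq> V \<and>
     (\<forall>u\<in>S. \<forall>v\<in>S. \<forall>w\<in>S. u \<noteq> v \<and> v \<noteq> w \<and> u \<noteq> w \<longrightarrow>
        \<not> (\<exists>P. geodesic V E P \<and> u \<in> set P \<and> v \<in> set P \<and> w \<in> set P))"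

definition gp_number :: "'a set \<Rightarrow> ('a \<Rightarrow> 'a \<Rightarrow> bool) \<Rightarrow> nat" where
  "gp_number V E = Max {card S | S. gp_set V E S}"

end

theory Submission
  imports Defs
begin

text \<open>Three vertices of a k-packing that lie on a common walk are pairwise more than k
  apart along the walk, so the walk has at least 2k + 3 vertices; a geodesic has at most
  diam + 1 vertices. Hence, when the diameter is at most 2k + 1, no geodesic contains three
  vertices of a k-packing, i.e. every k-packing is in general position.\<close>

lemma is_walk_dist_nth_le:
  assumes w: "is_walk V E P" and ij: "i \<le> j" "j < length P"
  shows "dist V E (P!i) (P!j) \<le> j - i"
proof -
  define xs where "xs = take (Suc (j - i)) (drop i P)"
  have len: "length xs = Suc (j - i)" using ij by (simp add: xs_def)
  have nth: "\<And>t. t < length xs \<Longrightarrow> xs ! t = P ! (i + t)"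
    using ij by (simp add: xs_def)
  have "is_walk V E xs"
    unfolding is_walk_def
  proof (intro conjI allI impI)
    show "xs \<noteq> []" using len by auto
    show "set xs \<subseteq> V" using w unfolding is_walk_def xs_def
      by (meson order_trans set_drop_subset set_take_subset)
  next
    fix t assume t: "Suc t < length xs"
    have "E (P ! (i + t)) (P ! Suc (i + t))"
      using w t len ij unfolding is_walk_def by auto
    thus "E (xs ! t) (xs ! Suc t)" using nth t by simp
  qed
  moreover have "hd xs = P ! i" using nth[of 0] len hd_conv_nth[of xs] by fastforce
  moreover have "last xs = P ! j"
    using nth[of "j - i"] len ij last_conv_nth[of xs] by fastforce
  ultimately show ?thesis
    unfolding dist_def using len by (intro Least_le) blast
qed

lemma k_packing_on_walk_length:
  assumes S: "k_packing V E k S" and w: "is_walk V E P"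
    and uvw: "u \<in> S" "v \<in> S" "w \<in> S" "u \<noteq> v" "v \<noteq> w" "u \<noteq> w"
    and onP: "u \<in> set P" "v \<in> set P" "w \<in> set P"
  shows "2 * k + 3 \<le> length P"
proof -
  obtain i j l where ijl: "i < length P" "P!i = u" "j < length P" "P!j = v"
      "l < length P" "P!l = w"
    using onP by (metis in_set_conv_nth)
  have gap: "a + k < b" if "a \<in> {i,j,l}" "b \<in> {i,j,l}" "a < b" for a b
  proof -
    have "P!a \<in> S" "P!b \<in> S" "P!a \<noteq> P!b"
      using that ijl uvw by auto
    then have "k < dist V E (P!a) (P!b)" using S unfolding k_packing_def by blast
    also have "\<dots> \<le> b - a" using is_walk_dist_nth_le[OF w] that ijl by auto
    finally show ?thesis by linarith
  qed
  have "i \<noteq> j" "j \<noteq> l" "i \<noteq> l" using ijl uvw by auto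
  moreover have "i < j \<Longrightarrow> i + k < j" "j < i \<Longrightarrow> j + k < i" "j < l \<Longrightarrow> j + k < l"
    "l < j \<Longrightarrow> l + k < j" "i < l \<Longrightarrow> i + k < l" "l < i \<Longrightarrow> l + k < i"
    by (simp_all add: gap)
  ultimately show ?thesis
    using ijl(1,3,5) by (cases "i < j"; cases "j < l"; cases "i < l") simp_all
qed

lemma geodesic_length_le_Suc_diam:
  assumes "finite V" and g: "geodesic V E P"
  shows "length P \<le> Suc (diam V E)"
proof -
  have "{dist V E u v | u v. u \<in> V \<and> v \<in> V} = (\<lambda>(u, v). dist V E u v) ` (V \<times> V)"
    by auto
  then have "finite {dist V E u v | u v. u \<in> V \<and> v \<in> V}"
    using assms(1) by simp
  moreover have "hd P \<in> V" "last P \<in> V" using g unfolding geodesic_def is_walk_def by auto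
  ultimately have "dist V E (hd P) (last P) \<le> diam V E"
    unfolding diam_def by (intro Max_ge) blast+
  then show ?thesis using g unfolding geodesic_def by simp
qed

lemma k_packing_imp_gp_set:
  assumes "finite V" and "diam V E \<le> 2 * k + 1" and S: "k_packing V E k S"
  shows "gp_set V E S"
  unfolding gp_set_def
proof (intro conjI ballI impI notI)
  show "S \<subseteq> V" using S unfolding k_packing_def by blast
next
  fix u v w
  assume uvw: "u \<in> S" "v \<in> S" "w \<in> S" "u \<noteq> v \<and> v \<noteq> w \<and> u \<noteq> w"
    and "\<exists>P. geodesic V E P \<and> u \<in> set P \<and> v \<in> set P \<and> w \<in> set P"
  then obtain P where g: "geodesic V E P" and onP: "u \<in> set P" "v \<in> set P" "w \<in> set P"
    by blast
  have "is_walk V E P" using g unfolding geodesic_def by blast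
  then have "2 * k + 3 \<le> length P"
    using k_packing_on_walk_length[OF S] uvw onP by blast
  then show False
    using geodesic_length_le_Suc_diam[OF assms(1) g] assms(2) by linarith
qed

lemma finite_card_subsets:
  assumes "finite V" and "\<And>S. Q S \<Longrightarrow> S \<subseteq> V"
  shows "finite {card S | S. Q S}"
proof -
  have "{card S | S. Q S} \<subseteq> card ` Pow V" using assms(2) by auto
  then show ?thesis using assms(1) by (meson finite_Pow_iff finite_imageI finite_subset)
qed

theorem corollary4p2:
  fixes V :: "'a set" and E :: "'a \<Rightarrow> 'a \<Rightarrow> bool" and k :: nat
  assumes "simple_graph V E" and "connected_graph V E"
    and "k \<ge> 1"
    and "diam V E \<le> 2 * k + 1"
  shows "gp_number V E \<ge> packing_number V E k"
proof -
  have finV: "finite V" using assms(1) unfolding simple_graph_def by blast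
  have "finite {card S | S. k_packing V E k S}"
    by (rule finite_card_subsets[OF finV]) (simp add: k_packing_def)
  moreover have "k_packing V E k {}" unfolding k_packing_def by simp
  ultimately have "packing_number V E k \<in> {card S | S. k_packing V E k S}"
    unfolding packing_number_def by (intro Max_in) blast+
  then obtain S where S: "k_packing V E k S" and cS: "packing_number V E k = card S"
    by blast
  have "finite {card S | S. gp_set V E S}"
    by (rule finite_card_subsets[OF finV]) (simp add: gp_set_def)
  moreover have "gp_set V E S" using k_packing_imp_gp_set[OF finV assms(4) S] .
  ultimately have "card S \<le> gp_number V E"
    unfolding gp_number_def by (intro Max_ge) blast+
  then show ?thesis using cS by simp
qed

end
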